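(* Let $n,k,d$ be integers with $1\le k\le d<n$, let $\alpha>0$, and let $i$ be an integer with $1\le i\le k$. Then $$C^{\mathrm{exact}}_{n,k,d}\left(\alpha,\frac{(d-k+i)\alpha}{d-k+1}\right)\ \ge\ \frac{n i\alpha}{n-k+i}.$$
   Context: A distributed storage system (DSS) with parameters $(n,k,d)$ stores a file across $n$ nodes, each storing an amount $\alpha$ of information (e.g. $\alpha$ symbols over a finite field, where symbols may be split into arbitrarily many sub-symbols), such that the file can be reconstructed from the contents of any $k$ nodes, and any lost node can be repaired by contacting any $d$ of the remaining nodes, each of which transmits an amount $\beta$ to the replacement node, for a total repair bandwidth $\gamma=d\beta$. Repair is exact: the replacement node stores exactly the same content as the lost node. $C^{\mathrm{exact}}_{n,k,d}(\alpha,\gamma)$ denotes the maximum size of a file that can be stored by such an exact-repair DSS with $n$ nodes, node size $\alpha$ and total repair bandwidth $\gamma$. *)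

theory Defs
  imports Complex_Main "HOL-Library.Extended_Real" "HOL-Computational_Algebra.Primes"
begin

(* Vectors of length m over an alphabet {0..<q} of size q (the symbols of GF(q)). *)
definition vecs :: "nat \<Rightarrow> nat \<Rightarrow> nat list set" where
  "vecs q m = {xs. length xs = m \<and> set xs \<subseteq> {..<q}}"

(* An exact-repair DSS with n nodes over GF(q) (q a prime power): the file is a vector of
   B symbols; node j < n stores enc j file, a vector of a symbols; any k nodes determine
   the file; any lost node l can be exactly repaired from any d other nodes, each sending
   b symbols computed from its own stored content only. *)
definition exact_dss ::
  "nat \<Rightarrow> nat \<Rightarrow> nat \<Rightarrow> nat \<Rightarrow> nat \<Rightarrow> nat \<Rightarrow> nat \<Rightarrow> (nat \<Rightarrow> nat list \<Rightarrow> nat list) \<Rightarrow> bool" where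
  "exact_dss n k d q B a b enc \<longleftrightarrow>
     (\<forall>j<n. \<forall>f\<in>vecs q B. enc j f \<in> vecs q a) \<and>
     (\<forall>K. K \<subseteq> {..<n} \<and> card K = k \<longrightarrow>
        (\<forall>f1\<in>vecs q B. \<forall>f2\<in>vecs q B. (\<forall>j\<in>K. enc j f1 = enc j f2) \<longrightarrow> f1 = f2)) \<and>
     (\<forall>l<n. \<forall>H. H \<subseteq> {..<n} - {l} \<and> card H = d \<longrightarrow>
        (\<exists>msg :: nat \<Rightarrow> nat list \<Rightarrow> nat list.
           (\<forall>j\<in>H. \<forall>c\<in>vecs q a. msg j c \<in> vecs q b) \<and>
           (\<forall>f1\<in>vecs q B. \<forall>f2\<in>vecs q B.
              (\<forall>j\<in>H. msg j (enc j f1) = msg j (enc j f2)) \<longrightarrow> enc l f1 = enc l f2)))"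

(* Capacity: supremum of the normalized file size B/L over all prime powers q,
   sub-packetization levels L \<ge> 1 (each symbol split into L sub-symbols), and exact-repair
   DSSs storing at most alpha*L sub-symbols per node with total repair bandwidth at most
   gamma*L sub-symbols (d helpers, each sending b \<le> (gamma/d)*L sub-symbols). *)
definition C_exact :: "nat \<Rightarrow> nat \<Rightarrow> nat \<Rightarrow> real \<Rightarrow> real \<Rightarrow> ereal" where
  "C_exact n k d \<alpha> \<gamma> = Sup {ereal (real B / real L) | B L q a b enc.
      L \<ge> 1 \<and> (\<exists>p m. prime p \<and> m \<ge> 1 \<and> q = p ^ m) \<and>
      real a \<le> \<alpha> * real L \<and> real d * real b \<le> \<gamma> * real L \<and>
      exact_dss n k d q B a b enc}"

end

theory Submission
  imports Defs "HOL-Computational_Algebra.Polynomial" "HOL-Combinatorics.Permutations"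
begin

text \<open>Ye and Barg's MSR array code, placed on only N = n - k + i of the n nodes, is an (N, i) MDS
  code in which every failed node is rebuilt from any h = d - k + i of the other N nodes, each
  sending a 1/s fraction of its content, s = d - k + 1; the other k - i nodes store nothing. Any k
  nodes include at least i of the first N, and any d helpers at least h of them, so this is an
  (n, k, d) exact-repair system, though a very unbalanced one. Running it once for every
  relabelling of the n nodes balances it: every node then stores the same amount, and the
  file-to-node-size ratio becomes n i / N, with repair bandwidth h/s times the node size.
  Replicating m times and letting m grow absorbs the rounding of the node size \<alpha> to a whole
  number of sub-symbols.\<close>

section \<open>Vandermonde systems modulo a prime\<close>

lemma nat_eq_if_int_dvd_diff_less:
  fixes a b p :: nat
  assumes "a < p" "b < p" "int p dvd int a - int b"
  shows "a = b"
  using assms by (metis mod_eq_dvd_iff mod_less of_nat_eq_iff zmod_int)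

lemma prime_dvd_if_vandermonde_sums:
  fixes x y :: "'m \<Rightarrow> int"
  assumes fin: "finite M" and p: "prime p" and card: "card M \<le> r"
    and distinct: "\<And>m m'. m \<in> M \<Longrightarrow> m' \<in> M \<Longrightarrow> m \<noteq> m' \<Longrightarrow> \<not> p dvd x m - x m'"
    and sums: "\<And>t. t < r \<Longrightarrow> p dvd (\<Sum>m\<in>M. x m ^ t * y m)"
    and m0: "m0 \<in> M"
  shows "p dvd y m0"
proof -
  \<comment> \<open>Combine the equations with the coefficients of a polynomial vanishing at all points but x m0.\<close>
  define P where "P = (\<Prod>m\<in>M-{m0}. [:- x m, 1:])"
  have "degree P = card M - 1"
    unfolding P_def using fin m0 by (subst degree_prod_eq_sum_degree) (auto simp: card_Diff_singleton)
  moreover have "card M > 0" using fin m0 card_gt_0_iff by blast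
  ultimately have deg: "degree P < r" using card by linarith
  have poly_P: "poly P z = (\<Prod>m\<in>M-{m0}. z - x m)" for z
    unfolding P_def by (simp add: poly_prod)
  have "(\<Sum>t\<le>degree P. coeff P t * (\<Sum>m\<in>M. x m ^ t * y m)) = (\<Sum>m\<in>M. y m * poly P (x m))"
    by (simp add: poly_altdef sum_distrib_left sum_distrib_right mult_ac) (rule sum.swap)
  also have "\<dots> = y m0 * poly P (x m0) + (\<Sum>m\<in>M-{m0}. y m * poly P (x m))"
    using fin m0 by (rule sum.remove)
  also have "(\<Sum>m\<in>M-{m0}. y m * poly P (x m)) = 0"
    using fin by (intro sum.neutral) (auto simp: poly_P intro!: prod_zero)
  finally have "y m0 * poly P (x m0) = (\<Sum>t\<le>degree P. coeff P t * (\<Sum>m\<in>M. x m ^ t * y m))"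
    by simp
  also have "p dvd \<dots>"
    using deg by (auto intro!: dvd_sum dvd_mult sums)
  finally have "p dvd y m0 * poly P (x m0)" .
  moreover have "\<not> p dvd poly P (x m0)"
    unfolding poly_P using fin p distinct m0 by (subst prime_dvd_prod_iff) auto
  ultimately show ?thesis using p by (simp add: prime_dvd_mult_iff)
qed

lemma vandermonde_solvable_mod_prime:
  fixes w :: "'m \<Rightarrow> int" and g :: "nat \<Rightarrow> int"
  assumes fin: "finite M" and p: "prime p" and card: "card M = r"
    and distinct: "\<And>m m'. m \<in> M \<Longrightarrow> m' \<in> M \<Longrightarrow> m \<noteq> m' \<Longrightarrow> \<not> int p dvd w m - w m'"
  shows "\<exists>z. (\<forall>m\<in>M. z m < p) \<and> (\<forall>t<r. int p dvd (\<Sum>m\<in>M. w m ^ t * int (z m)) + g t)"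
proof -
  \<comment> \<open>The linear map of the system is injective on residue vectors, hence onto by counting.\<close>
  define Dom where "Dom = (\<Pi>\<^sub>E m\<in>M. {..<p})"
  define Cod where "Cod = (\<Pi>\<^sub>E t\<in>{..<r}. {0..<int p})"
  define \<Phi> where "\<Phi> z = (\<lambda>t\<in>{..<r}. (\<Sum>m\<in>M. w m ^ t * int (z m)) mod int p)" for z
  have p0: "p > 0" using p prime_gt_0_nat by blast
  have "inj_on \<Phi> Dom"
  proof (rule inj_onI)
    fix z1 z2 assume z1: "z1 \<in> Dom" and z2: "z2 \<in> Dom" and eq: "\<Phi> z1 = \<Phi> z2"
    have "(\<Sum>m\<in>M. w m ^ t * int (z1 m)) mod int p = (\<Sum>m\<in>M. w m ^ t * int (z2 m)) mod int p"
      if "t < r" for t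
      using that fun_cong[OF eq, of t] by (simp add: \<Phi>_def)
    then have "int p dvd (\<Sum>m\<in>M. w m ^ t * int (z1 m)) - (\<Sum>m\<in>M. w m ^ t * int (z2 m))"
      if "t < r" for t
      using that by (simp add: mod_eq_dvd_iff)
    then have "int p dvd (\<Sum>m\<in>M. w m ^ t * (int (z1 m) - int (z2 m)))" if "t < r" for t
      using that by (simp add: sum_subtractf right_diff_distrib)
    then have "int p dvd int (z1 m) - int (z2 m)" if "m \<in> M" for m
      using that fin p card distinct
      by (intro prime_dvd_if_vandermonde_sums[where x = w and r = r and M = M and p = "int p"
            and y = "\<lambda>m. int (z1 m) - int (z2 m)"]) auto
    then have "z1 m = z2 m" if "m \<in> M" for m
      using that z1 z2 nat_eq_if_int_dvd_diff_less unfolding Dom_def by blast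
    then show "z1 = z2" using z1 z2 unfolding Dom_def by (auto intro: PiE_ext)
  qed
  then have "card (\<Phi> ` Dom) = card Cod"
    using fin card unfolding Dom_def Cod_def by (simp add: card_image card_PiE)
  moreover have "\<Phi> ` Dom \<subseteq> Cod"
    unfolding Cod_def \<Phi>_def using p0 by (auto simp: PiE_iff split: if_splits)
  moreover have "finite Cod"
    unfolding Cod_def by (simp add: finite_PiE)
  ultimately have "\<Phi> ` Dom = Cod"
    using card_subset_eq by blast
  moreover have "(\<lambda>t\<in>{..<r}. (- g t) mod int p) \<in> Cod"
    unfolding Cod_def using p0 by (simp add: PiE_iff)
  ultimately obtain z where z: "z \<in> Dom" "\<Phi> z = (\<lambda>t\<in>{..<r}. (- g t) mod int p)"
    by (metis imageE)
  have "(\<Sum>m\<in>M. w m ^ t * int (z m)) mod int p = (- g t) mod int p" if "t < r" for t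
    using that fun_cong[OF z(2), of t] by (simp add: \<Phi>_def)
  then have "int p dvd (\<Sum>m\<in>M. w m ^ t * int (z m)) + g t" if "t < r" for t
    using that by (simp add: mod_eq_dvd_iff)
  moreover have "\<forall>m\<in>M. z m < p" using z(1) unfolding Dom_def by auto
  ultimately show ?thesis by blast
qed

section \<open>Exact-repair systems from codes on arbitrary file sets\<close>

lemma card_vecs: "card (vecs q m) = q ^ m"
  unfolding vecs_def using card_lists_length_eq[of "{..<q}" m] by (simp add: conj_commute)

lemma finite_vecs: "finite (vecs q m)"
  unfolding vecs_def using finite_lists_length_eq[of "{..<q}" m] by (simp add: conj_commute)

lemma ex_inj_on_into_vecs:
  assumes "finite S" "card S \<le> q ^ m"
  shows "\<exists>f. inj_on f S \<and> f ` S \<subseteq> vecs q m"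
  using card_le_inj[OF assms(1) finite_vecs] assms(2) by (metis card_vecs)

lemma ex_message_into_vecs:
  fixes \<iota> :: "'c \<Rightarrow> 'x" and \<mu> :: "'c \<Rightarrow> 'm"
  assumes q: "0 < q" and S: "finite S" "inj_on \<iota> S" and card: "card (\<mu> ` S) \<le> q ^ b"
  shows "\<exists>\<mu>'. (\<forall>x. \<mu>' x \<in> vecs q b) \<and> (\<forall>c\<in>S. \<forall>c'\<in>S. \<mu>' (\<iota> c) = \<mu>' (\<iota> c') \<longleftrightarrow> \<mu> c = \<mu> c')"
proof -
  obtain \<kappa> where \<kappa>: "inj_on \<kappa> (\<mu> ` S)" "\<kappa> ` \<mu> ` S \<subseteq> vecs q b"
    using ex_inj_on_into_vecs[OF finite_imageI[OF S(1)] card] by blast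
  define \<mu>' where "\<mu>' x = (if x \<in> \<iota> ` S then \<kappa> (\<mu> (the_inv_into S \<iota> x)) else replicate b 0)" for x
  have "\<mu>' x \<in> vecs q b" for x
    using \<kappa>(2) q the_inv_into_into[OF S(2)] unfolding \<mu>'_def vecs_def by (auto simp: image_subset_iff)
  moreover have "\<mu>' (\<iota> c) = \<kappa> (\<mu> c)" if "c \<in> S" for c
    using that S(2) by (simp add: \<mu>'_def the_inv_into_f_f)
  ultimately show ?thesis
    using \<kappa>(1) by (intro exI[of _ \<mu>']) (auto simp: inj_on_eq_iff)
qed

lemma ex_repair_msgs_into_vecs:
  fixes \<iota> :: "nat \<Rightarrow> 'c \<Rightarrow> 'x" and msg :: "nat \<Rightarrow> 'c \<Rightarrow> 'm"
  assumes q: "0 < q" and F: "finite F"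
    and \<iota>: "\<And>j. j \<in> H \<Longrightarrow> inj_on (\<iota> j) (E j ` F)"
    and card: "\<And>j. j \<in> H \<Longrightarrow> card (msg j ` E j ` F) \<le> q ^ b"
    and determines: "\<forall>x\<in>F. \<forall>y\<in>F. (\<forall>j\<in>H. msg j (E j x) = msg j (E j y)) \<longrightarrow> E l x = E l y"
  shows "\<exists>\<mu>. (\<forall>j\<in>H. \<forall>c. \<mu> j c \<in> vecs q b) \<and>
    (\<forall>x\<in>F. \<forall>y\<in>F. (\<forall>j\<in>H. \<mu> j (\<iota> j (E j x)) = \<mu> j (\<iota> j (E j y))) \<longrightarrow> E l x = E l y)"
proof -
  have "\<forall>j\<in>H. \<exists>\<mu>. (\<forall>c. \<mu> c \<in> vecs q b) \<and>
      (\<forall>c\<in>E j ` F. \<forall>c'\<in>E j ` F. \<mu> (\<iota> j c) = \<mu> (\<iota> j c') \<longleftrightarrow> msg j c = msg j c')"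
    using ex_message_into_vecs[OF q finite_imageI[OF F]] \<iota> card by blast
  then obtain \<mu> where \<mu>: "\<forall>j\<in>H. (\<forall>c. \<mu> j c \<in> vecs q b) \<and>
      (\<forall>c\<in>E j ` F. \<forall>c'\<in>E j ` F. \<mu> j (\<iota> j c) = \<mu> j (\<iota> j c') \<longleftrightarrow> msg j c = msg j c')"
    by (rule bchoice[elim_format]) (elim exE)
  moreover have "E l x = E l y"
    if "x \<in> F" "y \<in> F" "\<forall>j\<in>H. \<mu> j (\<iota> j (E j x)) = \<mu> j (\<iota> j (E j y))" for x y
  proof -
    have "\<forall>j\<in>H. msg j (E j x) = msg j (E j y)"
      using \<mu> that by blast
    then show ?thesis
      using determines that(1,2) by blast
  qed
  ultimately show ?thesis
    by blast
qed

lemma ex_exact_dss_if_code_on_vecs: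
  fixes E :: "nat \<Rightarrow> nat list \<Rightarrow> 'c"
  assumes q: "0 < q"
    and storage: "\<And>j. j < n \<Longrightarrow> card (E j ` vecs q B) \<le> q ^ a"
    and decoding: "\<And>K x y. K \<subseteq> {..<n} \<Longrightarrow> card K = k \<Longrightarrow> x \<in> vecs q B \<Longrightarrow> y \<in> vecs q B \<Longrightarrow>
      (\<forall>j\<in>K. E j x = E j y) \<Longrightarrow> x = y"
    and repair: "\<And>l H. l < n \<Longrightarrow> H \<subseteq> {..<n} - {l} \<Longrightarrow> card H = d \<Longrightarrow>
      \<exists>msg :: nat \<Rightarrow> 'c \<Rightarrow> 'm. (\<forall>j\<in>H. card (msg j ` E j ` vecs q B) \<le> q ^ b) \<and>
        (\<forall>x\<in>vecs q B. \<forall>y\<in>vecs q B. (\<forall>j\<in>H. msg j (E j x) = msg j (E j y)) \<longrightarrow> E l x = E l y)"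
  shows "\<exists>enc. exact_dss n k d q B a b enc"
proof -
  have "\<forall>j\<in>{..<n}. \<exists>\<iota>. inj_on \<iota> (E j ` vecs q B) \<and> \<iota> ` E j ` vecs q B \<subseteq> vecs q a"
    using storage finite_vecs by (auto intro: ex_inj_on_into_vecs)
  then obtain \<iota> where \<iota>: "\<And>j. j < n \<Longrightarrow> inj_on (\<iota> j) (E j ` vecs q B) \<and> \<iota> j ` E j ` vecs q B \<subseteq> vecs q a"
    by (metis bchoice lessThan_iff)
  define enc where "enc j f = \<iota> j (E j f)" for j f
  have enc_vecs: "enc j f \<in> vecs q a" if "j < n" "f \<in> vecs q B" for j f
    unfolding enc_def using \<iota>[OF that(1)] that(2) by blast
  have enc_decodes: "f = f'"
    if "K \<subseteq> {..<n}" "card K = k" "f \<in> vecs q B" "f' \<in> vecs q B" "\<forall>j\<in>K. enc j f = enc j f'"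
    for K f f'
  proof -
    have "E j f = E j f'" if "j \<in> K" for j
    proof -
      have j: "j < n"
        using that \<open>K \<subseteq> {..<n}\<close> by auto
      have "\<iota> j (E j f) = \<iota> j (E j f')"
        using that \<open>\<forall>j\<in>K. enc j f = enc j f'\<close> unfolding enc_def by blast
      then show ?thesis
        by (rule inj_onD[OF conjunct1[OF \<iota>[OF j]]]) (use \<open>f \<in> vecs q B\<close> \<open>f' \<in> vecs q B\<close> in auto)
    qed
    then show ?thesis
      using decoding[OF that(1-4)] by blast
  qed
  have enc_repairs: "\<exists>msg. (\<forall>j\<in>H. \<forall>c\<in>vecs q a. msg j c \<in> vecs q b) \<and>
      (\<forall>f\<in>vecs q B. \<forall>f'\<in>vecs q B. (\<forall>j\<in>H. msg j (enc j f) = msg j (enc j f')) \<longrightarrow> enc l f = enc l f')"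
    if l: "l < n" and H: "H \<subseteq> {..<n} - {l}" "card H = d" for l H
  proof -
    obtain msg :: "nat \<Rightarrow> 'c \<Rightarrow> 'm" where msg: "\<forall>j\<in>H. card (msg j ` E j ` vecs q B) \<le> q ^ b"
      and determines: "\<forall>x\<in>vecs q B. \<forall>y\<in>vecs q B.
        (\<forall>j\<in>H. msg j (E j x) = msg j (E j y)) \<longrightarrow> E l x = E l y"
      using repair[OF l H] by blast
    have "inj_on (\<iota> j) (E j ` vecs q B)" if "j \<in> H" for j
      using that H(1) \<iota> by blast
    from ex_repair_msgs_into_vecs[OF q finite_vecs this msg[rule_format] determines]
    obtain \<mu> where \<mu>: "(\<forall>j\<in>H. \<forall>c. \<mu> j c \<in> vecs q b) \<and>
      (\<forall>x\<in>vecs q B. \<forall>y\<in>vecs q B. (\<forall>j\<in>H. \<mu> j (\<iota> j (E j x)) = \<mu> j (\<iota> j (E j y))) \<longrightarrow> E l x = E l y)"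
      ..
    show ?thesis
    proof (intro exI[of _ \<mu>] conjI ballI impI)
      show "\<mu> j c \<in> vecs q b" if "j \<in> H" for j c
        using \<mu> that by blast
      show "enc l f = enc l f'"
        if "f \<in> vecs q B" "f' \<in> vecs q B" "\<forall>j\<in>H. \<mu> j (enc j f) = \<mu> j (enc j f')" for f f'
      proof -
        have "E l f = E l f'"
          using \<mu> that unfolding enc_def by blast
        then show ?thesis
          unfolding enc_def by simp
      qed
    qed
  qed
  show ?thesis
    unfolding exact_dss_def
    by (rule exI[of _ enc], intro conjI allI impI ballI) (use enc_vecs enc_decodes enc_repairs in auto)
qed

lemma ex_exact_dss_if_code:
  fixes E :: "nat \<Rightarrow> 'f \<Rightarrow> 'c"
  assumes q: "0 < q" and F: "finite F" "q ^ B \<le> card F"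
    and storage: "\<And>j. j < n \<Longrightarrow> card (E j ` F) \<le> q ^ a"
    and decoding: "\<And>K x y. K \<subseteq> {..<n} \<Longrightarrow> card K = k \<Longrightarrow> x \<in> F \<Longrightarrow> y \<in> F \<Longrightarrow>
      (\<forall>j\<in>K. E j x = E j y) \<Longrightarrow> x = y"
    and repair: "\<And>l H. l < n \<Longrightarrow> H \<subseteq> {..<n} - {l} \<Longrightarrow> card H = d \<Longrightarrow>
      \<exists>msg :: nat \<Rightarrow> 'c \<Rightarrow> 'm. (\<forall>j\<in>H. card (msg j ` E j ` F) \<le> q ^ b) \<and>
        (\<forall>x\<in>F. \<forall>y\<in>F. (\<forall>j\<in>H. msg j (E j x) = msg j (E j y)) \<longrightarrow> E l x = E l y)"
  shows "\<exists>enc. exact_dss n k d q B a b enc"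
proof -
  \<comment> \<open>Store only the files in the image of an injection of vecs q B into F.\<close>
  obtain e where e: "inj_on e (vecs q B)" "e ` vecs q B \<subseteq> F"
    using card_le_inj[OF finite_vecs F(1)] F(2) by (metis card_vecs)
  show ?thesis
  proof (rule ex_exact_dss_if_code_on_vecs[OF q, where E = "\<lambda>j f. E j (e f)"])
    show "card ((\<lambda>f. E j (e f)) ` vecs q B) \<le> q ^ a" if "j < n" for j
      using card_mono[OF finite_imageI[OF F(1)] image_mono[OF e(2)], of "E j"] storage[OF that]
      by (simp add: image_image)
    show "x = y" if "K \<subseteq> {..<n}" "card K = k" "x \<in> vecs q B" "y \<in> vecs q B"
      "\<forall>j\<in>K. E j (e x) = E j (e y)" for K x y
    proof -
      have "e x = e y"
        using decoding[OF that(1,2) subsetD[OF e(2) imageI[OF that(3)]]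
            subsetD[OF e(2) imageI[OF that(4)]] that(5)] .
      then show ?thesis
        by (rule inj_onD[OF e(1) _ that(3,4)])
    qed
    show "\<exists>msg :: nat \<Rightarrow> 'c \<Rightarrow> 'm. (\<forall>j\<in>H. card (msg j ` (\<lambda>f. E j (e f)) ` vecs q B) \<le> q ^ b) \<and>
        (\<forall>x\<in>vecs q B. \<forall>y\<in>vecs q B. (\<forall>j\<in>H. msg j (E j (e x)) = msg j (E j (e y))) \<longrightarrow> E l (e x) = E l (e y))"
      if lH: "l < n" "H \<subseteq> {..<n} - {l}" "card H = d" for l H
    proof -
      obtain msg :: "nat \<Rightarrow> 'c \<Rightarrow> 'm" where msg: "\<forall>j\<in>H. card (msg j ` E j ` F) \<le> q ^ b"
        and determines: "\<forall>x\<in>F. \<forall>y\<in>F. (\<forall>j\<in>H. msg j (E j x) = msg j (E j y)) \<longrightarrow> E l x = E l y"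
        using repair[OF lH] by blast
      have card_le: "card (msg j ` (\<lambda>f. E j (e f)) ` vecs q B) \<le> card (msg j ` E j ` F)" for j
        using e(2) F(1) by (intro card_mono) auto
      show ?thesis
      proof (intro exI[of _ msg] conjI ballI impI)
        show "card (msg j ` (\<lambda>f. E j (e f)) ` vecs q B) \<le> q ^ b" if "j \<in> H" for j
          using order_trans[OF card_le msg[rule_format, OF that]] .
        show "E l (e x) = E l (e y)" if "x \<in> vecs q B" "y \<in> vecs q B"
          "\<forall>j\<in>H. msg j (E j (e x)) = msg j (E j (e y))" for x y
          using determines that(3) subsetD[OF e(2) imageI[OF that(1)]] subsetD[OF e(2) imageI[OF that(2)]]
          by blast
      qed
    qed
  qed
qed

section \<open>Symmetrization over relabellings of the nodes\<close>

lemma card_PiE_le_power_sum: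
  assumes "finite I" "\<And>z. z \<in> I \<Longrightarrow> card (A z) \<le> q ^ e z"
  shows "card (\<Pi>\<^sub>E z\<in>I. A z) \<le> q ^ (\<Sum>z\<in>I. e z)"
proof -
  have "card (\<Pi>\<^sub>E z\<in>I. A z) = (\<Prod>z\<in>I. card (A z))"
    using assms(1) by (rule card_PiE)
  also have "\<dots> \<le> (\<Prod>z\<in>I. q ^ e z)"
    by (rule prod_mono) (use assms(2) in auto)
  finally show ?thesis
    by (simp add: power_sum)
qed

abbreviation perms_below :: "nat \<Rightarrow> (nat \<Rightarrow> nat) set" where
  "perms_below n \<equiv> {\<pi>. \<pi> permutes {..<n}}"

lemma sum_permutes_apply:
  fixes f :: "nat \<Rightarrow> nat"
  assumes j: "j < n"
  shows "(\<Sum>\<pi>\<in>perms_below n. f (\<pi> j)) = fact (n - 1) * (\<Sum>y<n. f y)"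
proof -
  have same: "(\<Sum>\<pi>\<in>perms_below n. f (\<pi> j')) = (\<Sum>\<pi>\<in>perms_below n. f (\<pi> j))" if "j' < n" for j'
    using sum_permutations_compose_right[of "transpose j j'" "{..<n}" "\<lambda>\<pi>. f (\<pi> j)"] j that
    by (simp add: permutes_swap_id)
  have "(\<Sum>j'<n. \<Sum>\<pi>\<in>perms_below n. f (\<pi> j')) = (\<Sum>j'<n. \<Sum>\<pi>\<in>perms_below n. f (\<pi> j))"
    by (intro sum.cong refl same) simp
  then have "n * (\<Sum>\<pi>\<in>perms_below n. f (\<pi> j)) = (\<Sum>j'<n. \<Sum>\<pi>\<in>perms_below n. f (\<pi> j'))"
    by simp
  also have "\<dots> = (\<Sum>\<pi>\<in>perms_below n. \<Sum>j'<n. f (\<pi> j'))"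
    by (rule sum.swap)
  also have "\<dots> = (\<Sum>\<pi>\<in>perms_below n. \<Sum>y<n. f y)"
    by (intro sum.cong refl sum.reindex_bij_betw permutes_imp_bij) simp
  also have "\<dots> = n * (fact (n - 1) * (\<Sum>y<n. f y))"
    using j by (simp add: card_permutations fact_reduce)
  finally show ?thesis
    using j by simp
qed

lemma permutes_repair_instance:
  assumes "\<pi> permutes {..<n}" "l < n" "H \<subseteq> {..<n} - {l}" "card H = d"
  shows "\<pi> l < n" "\<pi> ` H \<subseteq> {..<n} - {\<pi> l}" "card (\<pi> ` H) = d"
  using assms permutes_in_image[OF assms(1)] permutes_inj[OF assms(1)]
  by (auto simp: card_image inj_eq inj_on_subset)

lemma sum_permutes_helpers_symmetric:
  assumes H: "H \<subseteq> {..<n} - {l}" and j: "j \<in> H" and j': "j' \<in> H"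
  shows "(\<Sum>\<pi>\<in>perms_below n. G (\<pi> l) (\<pi> ` H) (\<pi> j')) = (\<Sum>\<pi>\<in>perms_below n. G (\<pi> l) (\<pi> ` H) (\<pi> j))"
proof -
  \<comment> \<open>The transposition of two helpers fixes the failed node and the helper set.\<close>
  have "l \<noteq> j" "l \<noteq> j'"
    using j j' H by auto
  then have l_fixed: "transpose j j' l = l"
    by simp
  have H_fixed: "(\<pi> \<circ> transpose j j') ` H = \<pi> ` H" for \<pi>
    using j j' by (metis image_comp transpose_image_eq)
  have swap: "G ((\<pi> \<circ> transpose j j') l) ((\<pi> \<circ> transpose j j') ` H) ((\<pi> \<circ> transpose j j') j)
      = G (\<pi> l) (\<pi> ` H) (\<pi> j')" for \<pi>
    by (simp only: comp_apply transpose_apply_first l_fixed H_fixed)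
  have "transpose j j' permutes {..<n}"
    using j j' H by (intro permutes_swap_id) auto
  from sum_permutations_compose_right[OF this, of "\<lambda>\<pi>. G (\<pi> l) (\<pi> ` H) (\<pi> j)"] show ?thesis
    by (simp only: swap)
qed

text \<open>msg l H j is what helper j \<in> H sends when node l is repaired from H.\<close>

locale irregular_dss =
  fixes n k d q :: nat
    and F :: "'f set" and E :: "nat \<Rightarrow> 'f \<Rightarrow> 'c"
    and msg :: "nat \<Rightarrow> nat set \<Rightarrow> nat \<Rightarrow> 'c \<Rightarrow> 'm"
    and node_size :: "nat \<Rightarrow> nat"
    and msg_size :: "nat \<Rightarrow> nat set \<Rightarrow> nat \<Rightarrow> nat"
    and repair_size :: "nat \<Rightarrow> nat"
  assumes finite_files: "finite F"
    and card_node: "j < n \<Longrightarrow> card (E j ` F) \<le> q ^ node_size j"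
    and decoding: "K \<subseteq> {..<n} \<Longrightarrow> card K = k \<Longrightarrow> x \<in> F \<Longrightarrow> y \<in> F \<Longrightarrow>
      (\<forall>j\<in>K. E j x = E j y) \<Longrightarrow> x = y"
    and card_msg: "l < n \<Longrightarrow> H \<subseteq> {..<n} - {l} \<Longrightarrow> card H = d \<Longrightarrow> j \<in> H \<Longrightarrow>
      card (msg l H j ` E j ` F) \<le> q ^ msg_size l H j"
    and sum_msg_size: "l < n \<Longrightarrow> H \<subseteq> {..<n} - {l} \<Longrightarrow> card H = d \<Longrightarrow>
      (\<Sum>j\<in>H. msg_size l H j) = repair_size l"
    and repair: "l < n \<Longrightarrow> H \<subseteq> {..<n} - {l} \<Longrightarrow> card H = d \<Longrightarrow> x \<in> F \<Longrightarrow> y \<in> F \<Longrightarrow>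
      (\<forall>j\<in>H. msg l H j (E j x) = msg l H j (E j y)) \<Longrightarrow> E l x = E l y"
begin

text \<open>Symmetrization: run m copies of the code for every relabelling \<pi> of the nodes, node j
  playing the role of node \<pi> j in copy (\<pi>, c).\<close>

definition copies :: "nat \<Rightarrow> ((nat \<Rightarrow> nat) \<times> nat) set" where
  "copies m = perms_below n \<times> {..<m}"

definition sym_files :: "nat \<Rightarrow> ((nat \<Rightarrow> nat) \<times> nat \<Rightarrow> 'f) set" where
  "sym_files m = (\<Pi>\<^sub>E z\<in>copies m. F)"

definition sym_node :: "nat \<Rightarrow> nat \<Rightarrow> ((nat \<Rightarrow> nat) \<times> nat \<Rightarrow> 'f) \<Rightarrow> (nat \<Rightarrow> nat) \<times> nat \<Rightarrow> 'c" where
  "sym_node m j x = (\<lambda>z\<in>copies m. E (fst z j) (x z))"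

definition sym_msg :: "nat \<Rightarrow> nat \<Rightarrow> nat set \<Rightarrow> nat \<Rightarrow> ((nat \<Rightarrow> nat) \<times> nat \<Rightarrow> 'c) \<Rightarrow> (nat \<Rightarrow> nat) \<times> nat \<Rightarrow> 'm"
  where "sym_msg m l H j c = (\<lambda>z\<in>copies m. msg (fst z l) (fst z ` H) (fst z j) (c z))"

lemma finite_copies: "finite (copies m)"
  unfolding copies_def by (simp add: finite_permutations)

lemma card_copies: "card (copies m) = fact n * m"
  unfolding copies_def by (simp add: card_cartesian_product card_permutations)

lemma sum_copies: "(\<Sum>z\<in>copies m. g (fst z)) = m * (\<Sum>\<pi>\<in>perms_below n. g \<pi>)"
  unfolding copies_def by (simp add: sum.cartesian_product' sum_distrib_left)

lemma finite_sym_files: "finite (sym_files m)"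
  unfolding sym_files_def by (simp add: finite_PiE finite_copies finite_files)

lemma card_sym_files: "card (sym_files m) = card F ^ (fact n * m)"
  unfolding sym_files_def by (simp add: card_PiE finite_copies card_copies)

lemma card_sym_node:
  assumes "j < n"
  shows "card (sym_node m j ` sym_files m) \<le> q ^ (m * fact (n - 1) * (\<Sum>y<n. node_size y))"
proof -
  have "sym_node m j ` sym_files m \<subseteq> (\<Pi>\<^sub>E z\<in>copies m. E (fst z j) ` F)"
    unfolding sym_node_def sym_files_def by (auto simp: PiE_iff)
  then have "card (sym_node m j ` sym_files m) \<le> card (\<Pi>\<^sub>E z\<in>copies m. E (fst z j) ` F)"
    by (rule card_mono[rotated]) (simp add: finite_PiE finite_copies finite_files)
  also have "\<dots> \<le> q ^ (\<Sum>z\<in>copies m. node_size (fst z j))"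
    using assms card_node permutes_in_image
    by (intro card_PiE_le_power_sum finite_copies) (fastforce simp: copies_def)
  also have "(\<Sum>z\<in>copies m. node_size (fst z j)) = m * fact (n - 1) * (\<Sum>y<n. node_size y)"
    using sum_copies[where g = "\<lambda>\<pi>. node_size (\<pi> j)"] by (simp add: sum_permutes_apply[OF assms])
  finally show ?thesis .
qed

lemma sym_decoding:
  assumes K: "K \<subseteq> {..<n}" "card K = k" and xy: "x \<in> sym_files m" "y \<in> sym_files m"
    and agree: "\<forall>j\<in>K. sym_node m j x = sym_node m j y"
  shows "x = y"
proof (rule PiE_ext[OF xy[unfolded sym_files_def]])
  fix z assume z: "z \<in> copies m"
  then have \<pi>: "fst z permutes {..<n}"
    unfolding copies_def by auto
  have "fst z ` K \<subseteq> {..<n}" "card (fst z ` K) = k"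
    using K permutes_in_image[OF \<pi>] by (auto simp: card_image permutes_inj_on[OF \<pi>])
  moreover have "x z \<in> F" "y z \<in> F"
    using xy z unfolding sym_files_def by auto
  moreover have "\<forall>j\<in>fst z ` K. E j (x z) = E j (y z)"
    using agree z unfolding sym_node_def by (force dest: fun_cong[of _ _ z])
  ultimately show "x z = y z"
    by (rule decoding)
qed

lemma sum_permutes_msg_size:
  assumes l: "l < n" and H: "H \<subseteq> {..<n} - {l}" "card H = d" and j: "j \<in> H"
  shows "d * (\<Sum>\<pi>\<in>perms_below n. msg_size (\<pi> l) (\<pi> ` H) (\<pi> j)) =
    fact (n - 1) * (\<Sum>y<n. repair_size y)"
proof -
  define G where "G \<pi> j = msg_size (\<pi> l) (\<pi> ` H) (\<pi> j)" for \<pi> :: "nat \<Rightarrow> nat" and j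
  have same: "(\<Sum>\<pi>\<in>perms_below n. G \<pi> j') = (\<Sum>\<pi>\<in>perms_below n. G \<pi> j)" if "j' \<in> H" for j'
    unfolding G_def using H(1) j that by (rule sum_permutes_helpers_symmetric)
  have "(\<Sum>j'\<in>H. \<Sum>\<pi>\<in>perms_below n. G \<pi> j') = (\<Sum>j'\<in>H. \<Sum>\<pi>\<in>perms_below n. G \<pi> j)"
    by (intro sum.cong refl same)
  then have "d * (\<Sum>\<pi>\<in>perms_below n. G \<pi> j) = (\<Sum>j'\<in>H. \<Sum>\<pi>\<in>perms_below n. G \<pi> j')"
    using H(2) by simp
  also have "\<dots> = (\<Sum>\<pi>\<in>perms_below n. \<Sum>j'\<in>H. G \<pi> j')"
    by (rule sum.swap)
  also have "\<dots> = (\<Sum>\<pi>\<in>perms_below n. repair_size (\<pi> l))"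
  proof (rule sum.cong[OF refl])
    fix \<pi> assume "\<pi> \<in> perms_below n"
    then have \<pi>: "\<pi> permutes {..<n}" by simp
    have "(\<Sum>j'\<in>H. G \<pi> j') = (\<Sum>y\<in>\<pi> ` H. msg_size (\<pi> l) (\<pi> ` H) y)"
      unfolding G_def using \<pi> by (simp add: sum.reindex permutes_inj_on)
    also have "\<dots> = repair_size (\<pi> l)"
      using sum_msg_size permutes_repair_instance[OF \<pi> l H] by blast
    finally show "(\<Sum>j'\<in>H. G \<pi> j') = repair_size (\<pi> l)" .
  qed
  also have "\<dots> = fact (n - 1) * (\<Sum>y<n. repair_size y)"
    using l by (rule sum_permutes_apply)
  finally show ?thesis
    unfolding G_def .
qed

lemma card_sym_msg:
  assumes l: "l < n" and H: "H \<subseteq> {..<n} - {l}" "card H = d" and j: "j \<in> H"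
  shows "card (sym_msg m l H j ` sym_node m j ` sym_files m)
    \<le> q ^ ((m * fact (n - 1) * (\<Sum>y<n. repair_size y)) div d)"
proof -
  have "sym_msg m l H j ` sym_node m j ` sym_files m
      \<subseteq> (\<Pi>\<^sub>E z\<in>copies m. msg (fst z l) (fst z ` H) (fst z j) ` E (fst z j) ` F)"
    unfolding sym_msg_def sym_node_def sym_files_def by (auto simp: PiE_iff)
  then have "card (sym_msg m l H j ` sym_node m j ` sym_files m)
      \<le> card (\<Pi>\<^sub>E z\<in>copies m. msg (fst z l) (fst z ` H) (fst z j) ` E (fst z j) ` F)"
    by (rule card_mono[rotated]) (simp add: finite_PiE finite_copies finite_files)
  also have "\<dots> \<le> q ^ (\<Sum>z\<in>copies m. msg_size (fst z l) (fst z ` H) (fst z j))"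
  proof (rule card_PiE_le_power_sum[OF finite_copies])
    fix z assume "z \<in> copies m"
    then have \<pi>: "fst z permutes {..<n}" unfolding copies_def by auto
    show "card (msg (fst z l) (fst z ` H) (fst z j) ` E (fst z j) ` F)
        \<le> q ^ msg_size (fst z l) (fst z ` H) (fst z j)"
      using card_msg[OF permutes_repair_instance[OF \<pi> l H]] j by blast
  qed
  also have "(\<Sum>z\<in>copies m. msg_size (fst z l) (fst z ` H) (fst z j))
      = m * (\<Sum>\<pi>\<in>perms_below n. msg_size (\<pi> l) (\<pi> ` H) (\<pi> j))"
    by (rule sum_copies)
  also have "\<dots> = (d * (m * (\<Sum>\<pi>\<in>perms_below n. msg_size (\<pi> l) (\<pi> ` H) (\<pi> j)))) div d"
  proof -
    have "finite H"
      using H(1) by (rule finite_subset) simp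
    then have "0 < d"
      using H(2) j by (auto simp: card_gt_0_iff)
    then show ?thesis
      by simp
  qed
  also have "\<dots> = (m * fact (n - 1) * (\<Sum>y<n. repair_size y)) div d"
    by (simp only: mult.left_commute[of d m] sum_permutes_msg_size[OF l H j] mult.assoc)
  finally show ?thesis .
qed

lemma sym_repair:
  assumes l: "l < n" and H: "H \<subseteq> {..<n} - {l}" "card H = d"
    and xy: "x \<in> sym_files m" "y \<in> sym_files m"
    and agree: "\<forall>j\<in>H. sym_msg m l H j (sym_node m j x) = sym_msg m l H j (sym_node m j y)"
  shows "sym_node m l x = sym_node m l y"
proof -
  have "E (fst z l) (x z) = E (fst z l) (y z)" if z: "z \<in> copies m" for z
  proof -
    have \<pi>: "fst z permutes {..<n}" using z unfolding copies_def by auto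
    have "\<forall>j'\<in>fst z ` H. msg (fst z l) (fst z ` H) j' (E j' (x z))
        = msg (fst z l) (fst z ` H) j' (E j' (y z))"
      using agree z unfolding sym_msg_def sym_node_def by (force dest: fun_cong[of _ _ z])
    moreover have "x z \<in> F" "y z \<in> F"
      using xy z unfolding sym_files_def by auto
    ultimately show ?thesis
      using repair[OF permutes_repair_instance[OF \<pi> l H]] by blast
  qed
  then show ?thesis
    unfolding sym_node_def by auto
qed

theorem ex_exact_dss_symmetrized:
  assumes "0 < q" "0 < d" "q ^ B \<le> card F"
  shows "\<exists>enc. exact_dss n k d q (m * fact n * B) (m * fact (n - 1) * (\<Sum>y<n. node_size y))
    ((m * fact (n - 1) * (\<Sum>y<n. repair_size y)) div d) enc"
proof (rule ex_exact_dss_if_code[where E = "sym_node m" and F = "sym_files m"])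
  have "q ^ (m * fact n * B) = (q ^ B) ^ (fact n * m)"
    by (simp add: power_mult[symmetric] mult_ac)
  also have "\<dots> \<le> card (sym_files m)"
    using assms(3) by (simp add: card_sym_files power_mono)
  finally show "q ^ (m * fact n * B) \<le> card (sym_files m)" .
  show "\<exists>msg :: nat \<Rightarrow> ((nat \<Rightarrow> nat) \<times> nat \<Rightarrow> 'c) \<Rightarrow> (nat \<Rightarrow> nat) \<times> nat \<Rightarrow> 'm.
      (\<forall>j\<in>H. card (msg j ` sym_node m j ` sym_files m)
        \<le> q ^ ((m * fact (n - 1) * (\<Sum>y<n. repair_size y)) div d)) \<and>
      (\<forall>x\<in>sym_files m. \<forall>y\<in>sym_files m.
        (\<forall>j\<in>H. msg j (sym_node m j x) = msg j (sym_node m j y)) \<longrightarrow> sym_node m l x = sym_node m l y)"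
    if "l < n" "H \<subseteq> {..<n} - {l}" "card H = d" for l H
  proof (intro exI[of _ "sym_msg m l H"] conjI ballI impI)
    show "card (sym_msg m l H j ` sym_node m j ` sym_files m)
        \<le> q ^ ((m * fact (n - 1) * (\<Sum>y<n. repair_size y)) div d)" if "j \<in> H" for j
      using card_sym_msg[OF \<open>l < n\<close> \<open>H \<subseteq> {..<n} - {l}\<close> \<open>card H = d\<close> that] .
    show "sym_node m l x = sym_node m l y"
      if "x \<in> sym_files m" "y \<in> sym_files m"
        "\<forall>j\<in>H. sym_msg m l H j (sym_node m j x) = sym_msg m l H j (sym_node m j y)" for x y
      using sym_repair \<open>l < n\<close> \<open>H \<subseteq> {..<n} - {l}\<close> \<open>card H = d\<close> that by blast
  qed
qed (use assms finite_sym_files card_sym_node sym_decoding in auto)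

end

section \<open>Capacity bounds from families of codes\<close>

lemma C_exact_ge_of_code:
  assumes \<alpha>: "0 < \<alpha>" and \<gamma>: "0 \<le> \<gamma>" and A: "0 < A"
    and code: "prime p" "1 \<le> e" "exact_dss n k d (p ^ e) B A b enc"
    and bandwidth: "real d * real b \<le> \<gamma> * A / \<alpha>"
  shows "ereal (B * \<alpha> / (A + \<alpha>)) \<le> C_exact n k d \<alpha> \<gamma>"
proof -
  \<comment> \<open>Split every symbol into L = \<lceil>A / \<alpha>\<rceil> sub-symbols.\<close>
  define L where "L = nat \<lceil>A / \<alpha>\<rceil>"
  have "0 < A / \<alpha>"
    using A \<alpha> by simp
  then have "real L = of_int \<lceil>A / \<alpha>\<rceil>"
    unfolding L_def by simp
  then have L_ge: "A / \<alpha> \<le> L" and L_le: "L \<le> A / \<alpha> + 1"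
    using ceiling_correct[of "A / \<alpha>"] by linarith+
  with \<open>0 < A / \<alpha>\<close> have L_pos: "1 \<le> L"
    by linarith
  have "real A \<le> \<alpha> * L"
    using L_ge \<alpha> by (simp add: field_simps)
  moreover have "real d * real b \<le> \<gamma> * L"
    using bandwidth mult_left_mono[OF L_ge \<gamma>] by simp
  ultimately have "ereal (B / L) \<le> C_exact n k d \<alpha> \<gamma>"
    unfolding C_exact_def using L_pos code by (intro Sup_upper) blast
  moreover have "B * \<alpha> / (A + \<alpha>) = B / (A / \<alpha> + 1)"
    using \<alpha> by (simp add: field_simps)
  moreover have "B / (A / \<alpha> + 1) \<le> B / L"
    using L_le L_pos by (intro divide_left_mono) auto
  ultimately show ?thesis
    by (metis ereal_less_eq(3) order_trans)
qed

lemma C_exact_ge_if_replicable: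
  fixes X A :: nat and G \<alpha> \<gamma> :: real
  assumes \<alpha>: "0 < \<alpha>" and A: "0 < A" and G: "0 \<le> G" "G * \<alpha> \<le> \<gamma> * A"
    and codes: "\<And>m. 1 \<le> m \<Longrightarrow> \<exists>p e b enc. prime p \<and> 1 \<le> e \<and>
      exact_dss n k d (p ^ e) (m * X) (m * A) b enc \<and> real d * real b \<le> m * G"
  shows "ereal (X * \<alpha> / A) \<le> C_exact n k d \<alpha> \<gamma>"
proof (rule Lim_bounded)
  \<comment> \<open>Replicating m times makes the loss from rounding the sub-packetization negligible.\<close>
  show "(\<lambda>m. ereal (X * \<alpha> / (A + \<alpha> / real m))) \<longlonglongrightarrow> ereal (X * \<alpha> / A)"
    using A by (auto intro!: tendsto_eq_intros lim_const_over_n)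
  have "0 \<le> \<gamma> * A"
    using G \<alpha> by (smt (verit) mult_nonneg_nonneg)
  then have \<gamma>: "0 \<le> \<gamma>"
    using A by (simp add: zero_le_mult_iff)
  show "\<forall>m\<ge>1. ereal (X * \<alpha> / (A + \<alpha> / real m)) \<le> C_exact n k d \<alpha> \<gamma>"
  proof (intro allI impI)
    fix m :: nat assume m: "1 \<le> m"
    obtain p e b enc where code: "prime p" "1 \<le> e" "exact_dss n k d (p ^ e) (m * X) (m * A) b enc"
      and bandwidth: "real d * real b \<le> m * G"
      using codes[OF m] by blast
    have "real m * G \<le> \<gamma> * real (m * A) / \<alpha>"
      using G(2) \<alpha> m by (simp add: field_simps mult_left_mono)
    with bandwidth have "ereal (real (m * X) * \<alpha> / (real (m * A) + \<alpha>)) \<le> C_exact n k d \<alpha> \<gamma>"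
      using \<alpha> \<gamma> A m code by (intro C_exact_ge_of_code) auto
    moreover have "real (m * X) * \<alpha> / (real (m * A) + \<alpha>) = X * \<alpha> / (A + \<alpha> / m)"
      using m by (simp add: field_simps)
    ultimately show "ereal (X * \<alpha> / (A + \<alpha> / m)) \<le> C_exact n k d \<alpha> \<gamma>"
      by simp
  qed
qed

section \<open>The code of Ye and Barg\<close>

lemma card_le_card_Int_lessThan_add:
  assumes "K \<subseteq> {..<n}"
  shows "card K \<le> card (K \<inter> {..<m}) + (n - m)"
proof -
  have "card K \<le> card (K \<inter> {..<m}) + card (K - {..<m})"
    by (metis Int_Diff_Un card_Un_le)
  also have "card (K - {..<m}) \<le> card {m..<n}"
    using assms by (intro card_mono) auto
  finally show ?thesis
    by simp
qed

lemma sum_if_less_const: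
  fixes m n c :: nat
  assumes "m \<le> n"
  shows "(\<Sum>y<n. if y < m then c else 0) = m * c"
proof -
  have "{..<n} \<inter> {y. y < m} = {..<m}"
    using assms by auto
  then show ?thesis
    by (simp add: sum.If_cases)
qed

text \<open>Layers are the a \<in> [s]^N. In each layer the symbols c y of the nodes y < N satisfy the
  r = n - k parity checks \<Sum>y. \<lambda>(y, a y)^t c y = 0 (t < r) of a generalized Reed-Solomon code with
  the layer-dependent points \<lambda>(y, u) = y s + u, and the file supplies the symbols of the nodes
  y < i. Node y stores its symbol in every layer; the nodes y \<ge> N store nothing.\<close>

locale ye_barg =
  fixes n k d i p :: nat
  assumes k_ge_1: "1 \<le> k" and k_le_d: "k \<le> d" and d_less_n: "d < n"
    and i_ge_1: "1 \<le> i" and i_le_k: "i \<le> k"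
    and prime_p: "prime p" and p_large: "(n - k + i) * (d - k + 1) < p"
begin

definition N :: nat where "N = n - k + i"
definition r :: nat where "r = n - k"
definition h :: nat where "h = d - k + i"
definition s :: nat where "s = d - k + 1"

lemma N_eq: "N = i + r"
  and N_le_n: "N \<le> n" and n_minus_N: "n - N = k - i"
  and s_pos: "0 < s"
  and h_less_N: "h < N" and h_eq: "h = s + i - 1"
  and d_eq: "d = h + (k - i)"
  and p_pos: "0 < p" and Ns_less_p: "N * s < p"
  using k_ge_1 k_le_d d_less_n i_ge_1 i_le_k p_large
  unfolding N_def r_def h_def s_def by auto

definition layers :: "(nat \<Rightarrow> nat) set" where
  "layers = (\<Pi>\<^sub>E y\<in>{..<N}. {..<s})"

definition point :: "nat \<Rightarrow> nat \<Rightarrow> int" where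
  "point y u = int (y * s + u)"

lemma point_distinct:
  assumes "y < N" "y' < N" "u < s" "u' < s" "(y, u) \<noteq> (y', u')"
  shows "\<not> int p dvd point y u - point y' u'"
proof
  assume "int p dvd point y u - point y' u'"
  moreover have "y * s + u < p" if "y < N" "u < s" for y u
  proof -
    have "y * s + u < Suc y * s"
      using that(2) by simp
    also have "\<dots> \<le> N * s"
      using that(1) by (intro mult_le_mono1) simp
    also have "\<dots> < p"
      by (fact Ns_less_p)
    finally show ?thesis .
  qed
  ultimately have "y * s + u = y' * s + u'"
    using assms(1-4) by (intro nat_eq_if_int_dvd_diff_less[of _ p]) (auto simp: point_def)
  moreover have "(y * s + u) div s = y" "(y' * s + u') div s = y'"
    using assms(3,4) by simp_all
  ultimately have "y = y' \<and> u = u'"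
    by (metis add_left_cancel)
  then show False
    using assms(5) by simp
qed

definition files :: "(nat \<times> (nat \<Rightarrow> nat) \<Rightarrow> nat) set" where
  "files = (\<Pi>\<^sub>E x\<in>{..<i} \<times> layers. {..<p})"

definition codeword :: "(nat \<times> (nat \<Rightarrow> nat) \<Rightarrow> nat) \<Rightarrow> (nat \<Rightarrow> nat) \<Rightarrow> nat \<Rightarrow> nat" where
  "codeword f a = (SOME c. (\<forall>y<i. c y = f (y, a)) \<and> (\<forall>y\<in>{i..<N}. c y < p) \<and>
     (\<forall>t<r. int p dvd (\<Sum>y<N. point y (a y) ^ t * int (c y))))"

lemma finite_layers: "finite layers"
  unfolding layers_def by (simp add: finite_PiE)

lemma card_layers: "card layers = s ^ N"
  unfolding layers_def by (simp add: card_PiE)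

lemma finite_files: "finite files"
  unfolding files_def by (simp add: finite_PiE finite_layers)

lemma card_files: "card files = p ^ (i * s ^ N)"
  unfolding files_def by (simp add: card_PiE finite_layers card_cartesian_product card_layers)

lemma points_distinct_at_layer:
  assumes "a \<in> layers" "y \<in> M" "y' \<in> M" "M \<subseteq> {..<N}" "y \<noteq> y'"
  shows "\<not> int p dvd point y (a y) - point y' (a y')"
  using assms point_distinct[of y y' "a y" "a y'"] unfolding layers_def by auto

lemma ex_codeword:
  assumes a: "a \<in> layers"
  shows "\<exists>c. (\<forall>y<i. c y = f (y, a)) \<and> (\<forall>y\<in>{i..<N}. c y < p) \<and>
     (\<forall>t<r. int p dvd (\<Sum>y<N. point y (a y) ^ t * int (c y)))"
proof -
  \<comment> \<open>The r parity symbols solve a Vandermonde system whose right-hand side comes from the i data symbols.\<close>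
  have "card {i..<N} = r"
    using N_eq by simp
  moreover have "\<not> int p dvd point y (a y) - point y' (a y')"
    if "y \<in> {i..<N}" "y' \<in> {i..<N}" "y \<noteq> y'" for y y'
    using that by (intro points_distinct_at_layer[OF a, of _ "{i..<N}"]) auto
  ultimately obtain z where z: "\<forall>y\<in>{i..<N}. z y < p"
    and checks: "\<forall>t<r. int p dvd (\<Sum>y\<in>{i..<N}. point y (a y) ^ t * int (z y))
      + (\<Sum>y<i. point y (a y) ^ t * int (f (y, a)))"
    using vandermonde_solvable_mod_prime[OF finite_atLeastLessThan prime_p,
        of i N r "\<lambda>y. point y (a y)" "\<lambda>t. \<Sum>y<i. point y (a y) ^ t * int (f (y, a))"]
    by blast
  define c where "c y = (if y < i then f (y, a) else z y)" for y
  have "(\<Sum>y<N. point y (a y) ^ t * int (c y)) = (\<Sum>y<i. point y (a y) ^ t * int (f (y, a)))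
      + (\<Sum>y\<in>{i..<N}. point y (a y) ^ t * int (z y))" for t
  proof -
    have "(\<Sum>y<N. point y (a y) ^ t * int (c y)) = (\<Sum>y<i. point y (a y) ^ t * int (c y))
        + (\<Sum>y\<in>{i..<N}. point y (a y) ^ t * int (c y))"
      using N_eq by (simp add: lessThan_atLeast0 sum.atLeastLessThan_concat)
    then show ?thesis
      unfolding c_def by simp
  qed
  then show ?thesis
    using z checks by (intro exI[of _ c]) (auto simp: c_def add.commute)
qed

lemma codeword_spec:
  assumes "a \<in> layers"
  shows "(\<forall>y<i. codeword f a y = f (y, a)) \<and> (\<forall>y\<in>{i..<N}. codeword f a y < p) \<and>
     (\<forall>t<r. int p dvd (\<Sum>y<N. point y (a y) ^ t * int (codeword f a y)))"
  unfolding codeword_def by (rule someI_ex[OF ex_codeword[OF assms]])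

lemma codeword_less:
  assumes "f \<in> files" "a \<in> layers" "y < N"
  shows "codeword f a y < p"
  using codeword_spec[OF assms(2), of f] assms unfolding files_def
  by (cases "y < i") (auto simp: PiE_iff)

definition codeword_diff :: "(nat \<times> (nat \<Rightarrow> nat) \<Rightarrow> nat) \<Rightarrow> (nat \<times> (nat \<Rightarrow> nat) \<Rightarrow> nat) \<Rightarrow> (nat \<Rightarrow> nat) \<Rightarrow> nat \<Rightarrow> int"
  where "codeword_diff f g a y = int (codeword f a y) - int (codeword g a y)"

lemma codeword_eq_if_dvd_diff:
  assumes "f \<in> files" "g \<in> files" "a \<in> layers" "y < N" "int p dvd codeword_diff f g a y"
  shows "codeword f a y = codeword g a y"
  using assms nat_eq_if_int_dvd_diff_less codeword_less unfolding codeword_diff_def by blast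

lemma codeword_parity_diff:
  assumes "a \<in> layers" "t < r"
  shows "int p dvd (\<Sum>y<N. point y (a y) ^ t * codeword_diff f g a y)"
proof -
  have "int p dvd (\<Sum>y<N. point y (a y) ^ t * int (codeword f a y))
      - (\<Sum>y<N. point y (a y) ^ t * int (codeword g a y))"
    using codeword_spec[OF assms(1), of f] codeword_spec[OF assms(1), of g] assms(2)
    by (intro dvd_diff) auto
  then show ?thesis
    by (simp add: codeword_diff_def sum_subtractf right_diff_distrib)
qed

lemma codeword_eq_if_agree:
  assumes a: "a \<in> layers" and fg: "f \<in> files" "g \<in> files"
    and K: "K \<subseteq> {..<N}" "i \<le> card K" and agree: "\<forall>y\<in>K. codeword f a y = codeword g a y"
    and y: "y < N"
  shows "codeword f a y = codeword g a y"
proof (cases "y \<in> K")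
  case False
  \<comment> \<open>The at most r unknown differences satisfy the r parity checks, whose matrix is Vandermonde.\<close>
  define M where "M = {..<N} - K"
  have "int p dvd (\<Sum>y\<in>M. point y (a y) ^ t * codeword_diff f g a y)" if "t < r" for t
    using codeword_parity_diff[OF a that, of f g] agree
    unfolding M_def by (subst sum.mono_neutral_right[symmetric]) (auto simp: codeword_diff_def)
  moreover have "card M \<le> r"
    using K N_eq unfolding M_def by (simp add: card_Diff_subset finite_subset)
  ultimately have "int p dvd codeword_diff f g a y"
    using prime_p False y points_distinct_at_layer[OF a _ _ Diff_subset[of "{..<N}" K]]
    by (intro prime_dvd_if_vandermonde_sums[where M = M and r = r and x = "\<lambda>y. point y (a y)"
          and y = "codeword_diff f g a"]) (auto simp: M_def)
  then show ?thesis
    by (rule codeword_eq_if_dvd_diff[OF fg a y])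
qed (use agree in blast)

definition node :: "nat \<Rightarrow> (nat \<times> (nat \<Rightarrow> nat) \<Rightarrow> nat) \<Rightarrow> (nat \<Rightarrow> nat) \<Rightarrow> nat" where
  "node y f = (\<lambda>a\<in>layers. if y < N then codeword f a y else 0)"

definition node_size :: "nat \<Rightarrow> nat" where
  "node_size y = (if y < N then s ^ N else 0)"

lemma card_node: "card (node y ` files) \<le> p ^ node_size y"
proof (cases "y < N")
  case True
  then have "node y ` files \<subseteq> (\<Pi>\<^sub>E a\<in>layers. {..<p})"
    unfolding node_def using codeword_less by auto
  then have "card (node y ` files) \<le> card (\<Pi>\<^sub>E a\<in>layers. {..<p})"
    by (rule card_mono[rotated]) (simp add: finite_PiE finite_layers)
  then show ?thesis
    using True by (simp add: card_PiE finite_layers card_layers node_size_def)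
next
  case False
  then have "node y ` files \<subseteq> {\<lambda>a\<in>layers. 0}"
    unfolding node_def by auto
  then have "card (node y ` files) \<le> card {\<lambda>a\<in>layers. 0 :: nat}"
    by (rule card_mono[rotated]) simp
  then show ?thesis
    using False by (simp add: node_size_def)
qed

lemma node_decoding:
  assumes K: "K \<subseteq> {..<n}" "card K = k" and fg: "f \<in> files" "g \<in> files"
    and agree: "\<forall>j\<in>K. node j f = node j g"
  shows "f = g"
proof (rule PiE_ext[OF fg[unfolded files_def]])
  fix x assume "x \<in> {..<i} \<times> layers"
  then obtain y a where x: "x = (y, a)" "y < i" and a: "a \<in> layers"
    by auto
  have "i \<le> card (K \<inter> {..<N})"
    using card_le_card_Int_lessThan_add[OF K(1), of N] K(2) n_minus_N i_le_k by linarith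
  moreover have "\<forall>y\<in>K \<inter> {..<N}. codeword f a y = codeword g a y"
    using agree a unfolding node_def by (force dest: fun_cong[of _ _ a])
  ultimately have "codeword f a y = codeword g a y"
    using codeword_eq_if_agree[OF a fg, of "K \<inter> {..<N}"] x N_eq by auto
  then show "f x = g x"
    using codeword_spec[OF a] x by auto
qed

definition base_layers :: "nat \<Rightarrow> (nat \<Rightarrow> nat) set" where
  "base_layers l = (\<Pi>\<^sub>E y\<in>{..<N}. if y = l then {0} else {..<s})"

lemma finite_base_layers: "finite (base_layers l)"
  unfolding base_layers_def by (simp add: finite_PiE)

lemma card_base_layers:
  assumes "l < N"
  shows "card (base_layers l) = s ^ (N - 1)"
proof -
  have "card (base_layers l) = (\<Prod>y<N. if y = l then 1 else s)"
    unfolding base_layers_def by (simp add: card_PiE if_distrib cong: if_cong)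
  also have "\<dots> = (\<Prod>y\<in>{..<N} - {l}. s)"
    using assms by (subst prod.remove[of _ l]) auto
  finally show ?thesis
    using assms by simp
qed

lemma base_layers_upd:
  assumes "l < N" "a \<in> base_layers l" "u < s"
  shows "a(l := u) \<in> layers"
  using assms unfolding base_layers_def layers_def by (auto simp: PiE_iff extensional_def split: if_splits)

lemma layers_upd_zero:
  assumes "l < N" "a \<in> layers"
  shows "a(l := 0) \<in> base_layers l"
  using assms unfolding base_layers_def layers_def by (auto simp: PiE_iff extensional_def)

lemma codeword_parity_fiber:
  assumes l: "l < N" and a: "a \<in> base_layers l" and t: "t < r"
  shows "int p dvd (\<Sum>u<s. point l u ^ t * codeword_diff f g (a(l := u)) l)
    + (\<Sum>y\<in>{..<N} - {l}. point y (a y) ^ t * (\<Sum>u<s. codeword_diff f g (a(l := u)) y))"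
proof -
  \<comment> \<open>Sum the t-th parity check over the s layers that differ only at position l: every other
    node y sees the same point in all of them.\<close>
  have "int p dvd (\<Sum>u<s. \<Sum>y<N. point y ((a(l := u)) y) ^ t * codeword_diff f g (a(l := u)) y)"
    using codeword_parity_diff[OF base_layers_upd[OF l a] t]
    by (rule dvd_sum) simp
  also have "(\<Sum>u<s. \<Sum>y<N. point y ((a(l := u)) y) ^ t * codeword_diff f g (a(l := u)) y)
      = (\<Sum>y<N. \<Sum>u<s. point y ((a(l := u)) y) ^ t * codeword_diff f g (a(l := u)) y)"
    by (rule sum.swap)
  also have "\<dots> = (\<Sum>u<s. point l u ^ t * codeword_diff f g (a(l := u)) l)
      + (\<Sum>y\<in>{..<N} - {l}. \<Sum>u<s. point y ((a(l := u)) y) ^ t * codeword_diff f g (a(l := u)) y)"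
    using l by (subst sum.remove[of _ l]) auto
  also have "(\<Sum>y\<in>{..<N} - {l}. \<Sum>u<s. point y ((a(l := u)) y) ^ t * codeword_diff f g (a(l := u)) y)
      = (\<Sum>y\<in>{..<N} - {l}. point y (a y) ^ t * (\<Sum>u<s. codeword_diff f g (a(l := u)) y))"
    by (intro sum.cong refl) (auto simp: sum_distrib_left)
  finally show ?thesis .
qed

lemma codeword_repair:
  assumes l: "l < N" and Rs: "Rs \<subseteq> {..<N} - {l}" "card Rs = h"
    and a: "a \<in> base_layers l" and fg: "f \<in> files" "g \<in> files"
    and helpers: "\<And>y. y \<in> Rs \<Longrightarrow> int p dvd (\<Sum>u<s. codeword_diff f g (a(l := u)) y)"
    and u: "u < s"
  shows "codeword f (a(l := u)) l = codeword g (a(l := u)) l"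
proof -
  \<comment> \<open>Unknowns: the s symbols of node l and the sums of the N - 1 - h silent nodes, r in total.\<close>
  define U where "U = {..<N} - {l} - Rs"
  define M where "M = {..<s} <+> U"
  define pos where "pos = case_sum (\<lambda>u. (l, u)) (\<lambda>y. (y, a y))"
  define v where "v = case_sum (\<lambda>u. codeword_diff f g (a(l := u)) l)
    (\<lambda>y. \<Sum>u<s. codeword_diff f g (a(l := u)) y)"
  have finite_U: "finite U"
    unfolding U_def by simp
  have a_less: "a y < s" if "y < N" "y \<noteq> l" for y
    using PiE_mem[OF a[unfolded base_layers_def], of y] that by simp
  have finite_Rs: "finite Rs"
    using Rs(1) by (rule finite_subset) simp
  have "{..<N} - {l} = Rs \<union> U" "Rs \<inter> U = {}"
    using Rs(1) unfolding U_def by auto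
  then have "card Rs + card U = N - 1"
    using l finite_Rs finite_U by (metis card_Diff_singleton card_Un_disjoint card_lessThan finite_lessThan lessThan_iff)
  then have "card M = r"
    unfolding M_def using Rs(2) finite_U N_eq h_eq s_pos i_ge_1 by (simp add: card_Plus)
  have "int p dvd (\<Sum>m\<in>M. case_prod point (pos m) ^ t * v m)" if t: "t < r" for t
  proof -
    define fiber_sum where "fiber_sum Y = (\<Sum>y\<in>Y. point y (a y) ^ t * (\<Sum>u<s. codeword_diff f g (a(l := u)) y))"
      for Y
    define own where "own = (\<Sum>u<s. point l u ^ t * codeword_diff f g (a(l := u)) l)"
    have "int p dvd own + (fiber_sum Rs + fiber_sum U)"
      using codeword_parity_fiber[OF l a t, of f g] \<open>{..<N} - {l} = Rs \<union> U\<close> \<open>Rs \<inter> U = {}\<close>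
        finite_U finite_Rs
      unfolding own_def fiber_sum_def by (simp add: sum.union_disjoint)
    moreover have "int p dvd fiber_sum Rs"
      unfolding fiber_sum_def using helpers by (simp add: dvd_sum)
    ultimately have "int p dvd own + (fiber_sum Rs + fiber_sum U) - fiber_sum Rs"
      by (rule dvd_diff)
    moreover have "(\<Sum>m\<in>M. case_prod point (pos m) ^ t * v m) = own + fiber_sum U"
      unfolding M_def pos_def v_def own_def fiber_sum_def using finite_U by (simp add: sum.Plus)
    ultimately show ?thesis
      by simp
  qed
  moreover have "\<not> int p dvd case_prod point (pos m) - case_prod point (pos m')"
    if "m \<in> M" "m' \<in> M" "m \<noteq> m'" for m m'
  proof -
    have "pos m \<in> {..<N} \<times> {..<s}" if "m \<in> M" for m
    proof (cases m)
      case (Inr y)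
      then have "y < N" "y \<noteq> l"
        using that unfolding M_def U_def by auto
      then show ?thesis
        using Inr a_less unfolding pos_def by simp
    qed (use that l in \<open>auto simp: M_def pos_def\<close>)
    then have "pos m \<in> {..<N} \<times> {..<s}" "pos m' \<in> {..<N} \<times> {..<s}"
      using that(1,2) by blast+
    moreover have "pos m \<noteq> pos m'"
      using that unfolding M_def U_def pos_def by (auto split: sum.splits)
    ultimately show ?thesis
      using point_distinct by (auto split: prod.splits)
  qed
  ultimately have "int p dvd v (Inl u)"
    using prime_p u \<open>card M = r\<close> finite_U
    by (intro prime_dvd_if_vandermonde_sums[where M = M and r = r and x = "\<lambda>m. case_prod point (pos m)"
          and y = v]) (auto simp: M_def)
  then show ?thesis
    unfolding v_def using codeword_eq_if_dvd_diff[OF fg base_layers_upd[OF l a u] l] by simp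
qed

definition helpers :: "nat \<Rightarrow> nat set \<Rightarrow> nat set" where
  "helpers l H = (SOME S. S \<subseteq> H \<inter> {..<N} \<and> card S = h)"

lemma helpers_subset_card:
  assumes "H \<subseteq> {..<n} - {l}" "card H = d"
  shows "helpers l H \<subseteq> H \<inter> {..<N}" "card (helpers l H) = h"
proof -
  have "card H \<le> card (H \<inter> {..<N}) + (n - N)"
    using assms(1) by (intro card_le_card_Int_lessThan_add) auto
  then have "h \<le> card (H \<inter> {..<N})"
    using assms(2) d_eq n_minus_N by linarith
  then have "\<exists>S. S \<subseteq> H \<inter> {..<N} \<and> card S = h"
    by (meson obtain_subset_with_card_n)
  then show "helpers l H \<subseteq> H \<inter> {..<N}" "card (helpers l H) = h"
    unfolding helpers_def by (metis (mono_tags, lifting) someI_ex)+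
qed

definition repair_msg :: "nat \<Rightarrow> nat set \<Rightarrow> nat \<Rightarrow> ((nat \<Rightarrow> nat) \<Rightarrow> nat) \<Rightarrow> (nat \<Rightarrow> nat) \<Rightarrow> nat" where
  "repair_msg l H y c = (\<lambda>a\<in>base_layers l.
     if l < N \<and> y \<in> helpers l H then (\<Sum>u<s. c (a(l := u))) mod p else 0)"

definition msg_size :: "nat \<Rightarrow> nat set \<Rightarrow> nat \<Rightarrow> nat" where
  "msg_size l H y = (if l < N \<and> y \<in> helpers l H then s ^ (N - 1) else 0)"

definition repair_size :: "nat \<Rightarrow> nat" where
  "repair_size l = (if l < N then h * s ^ (N - 1) else 0)"

lemma card_repair_msg: "card (repair_msg l H y ` node y ` files) \<le> p ^ msg_size l H y"
proof (cases "l < N \<and> y \<in> helpers l H")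
  case True
  then have "repair_msg l H y ` node y ` files \<subseteq> (\<Pi>\<^sub>E a\<in>base_layers l. {..<p})"
    unfolding repair_msg_def using p_pos by auto
  then have "card (repair_msg l H y ` node y ` files) \<le> card (\<Pi>\<^sub>E a\<in>base_layers l. {..<p})"
    by (rule card_mono[rotated]) (simp add: finite_PiE finite_base_layers)
  then show ?thesis
    using True by (simp add: card_PiE finite_base_layers card_base_layers msg_size_def)
next
  case False
  then have "repair_msg l H y ` node y ` files \<subseteq> {\<lambda>a\<in>base_layers l. 0 :: nat}"
    unfolding repair_msg_def by auto
  then have "card (repair_msg l H y ` node y ` files) \<le> card {\<lambda>a\<in>base_layers l. 0 :: nat}"
    by (rule card_mono[rotated]) simp
  moreover have "msg_size l H y = 0"
    using False unfolding msg_size_def by (simp only: if_False)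
  ultimately show ?thesis
    by simp
qed

lemma sum_msg_size:
  assumes "H \<subseteq> {..<n} - {l}" "card H = d"
  shows "(\<Sum>y\<in>H. msg_size l H y) = repair_size l"
proof (cases "l < N")
  case True
  have "finite H"
    using assms(1) by (rule finite_subset) simp
  then have "(\<Sum>y\<in>H. msg_size l H y) = card (H \<inter> helpers l H) * s ^ (N - 1)"
    using True by (simp add: msg_size_def sum.If_cases)
  also have "H \<inter> helpers l H = helpers l H"
    using helpers_subset_card[OF assms] by auto
  finally show ?thesis
    using True helpers_subset_card[OF assms] by (simp add: repair_size_def)
qed (simp add: msg_size_def repair_size_def)

lemma node_repair:
  assumes H: "H \<subseteq> {..<n} - {l}" "card H = d" and fg: "f \<in> files" "g \<in> files"
    and agree: "\<forall>y\<in>H. repair_msg l H y (node y f) = repair_msg l H y (node y g)"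
  shows "node l f = node l g"
proof (cases "l < N")
  case l: True
  have "codeword f a' l = codeword g a' l" if a': "a' \<in> layers" for a'
  proof -
    define a where "a = a'(l := 0)"
    have a: "a \<in> base_layers l"
      unfolding a_def using l a' by (rule layers_upd_zero)
    have "int p dvd (\<Sum>u<s. codeword_diff f g (a(l := u)) y)" if y: "y \<in> helpers l H" for y
    proof -
      have "y < N" "y \<in> H"
        using y helpers_subset_card[OF H] by auto
      then have "(\<Sum>u<s. codeword f (a(l := u)) y) mod p = (\<Sum>u<s. codeword g (a(l := u)) y) mod p"
        using agree y l a base_layers_upd[OF l a] unfolding repair_msg_def node_def
        by (force dest: fun_cong[of _ _ a])
      then have "int (\<Sum>u<s. codeword f (a(l := u)) y) mod int p
          = int (\<Sum>u<s. codeword g (a(l := u)) y) mod int p"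
        by (metis of_nat_mod)
      then show ?thesis
        by (simp add: codeword_diff_def sum_subtractf mod_eq_dvd_iff)
    qed
    moreover have "helpers l H \<subseteq> {..<N} - {l}"
      using helpers_subset_card[OF H] H(1) by auto
    moreover have "a' l < s"
      using a' l unfolding layers_def by auto
    ultimately have "codeword f (a(l := a' l)) l = codeword g (a(l := a' l)) l"
      using codeword_repair[OF l _ _ a fg] helpers_subset_card[OF H] by blast
    then show ?thesis
      unfolding a_def by simp
  qed
  then show ?thesis
    unfolding node_def by auto
qed (simp add: node_def)

theorem ex_exact_dss:
  "\<exists>enc. exact_dss n k d p (m * fact n * (i * s ^ N)) (m * fact (n - 1) * (N * s ^ N))
     ((m * fact (n - 1) * (N * (h * s ^ (N - 1)))) div d) enc"
proof -
  interpret base: irregular_dss n k d p files node repair_msg node_size msg_size repair_size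
  proof
    show "finite files"
      by (fact finite_files)
    show "card (node j ` files) \<le> p ^ node_size j" for j
      by (fact card_node)
    show "card (repair_msg l H j ` node j ` files) \<le> p ^ msg_size l H j" for l H j
      by (fact card_repair_msg)
    show "x = y" if "K \<subseteq> {..<n}" "card K = k" "x \<in> files" "y \<in> files"
      "\<forall>j\<in>K. node j x = node j y" for K x y
      using that by (rule node_decoding)
    show "(\<Sum>j\<in>H. msg_size l H j) = repair_size l" if "H \<subseteq> {..<n} - {l}" "card H = d" for l H
      using that by (rule sum_msg_size)
    show "node l x = node l y" if "H \<subseteq> {..<n} - {l}" "card H = d" "x \<in> files" "y \<in> files"
      "\<forall>j\<in>H. repair_msg l H j (node j x) = repair_msg l H j (node j y)" for l H x y
      using that by (rule node_repair)
  qed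
  have "\<exists>enc. exact_dss n k d p (m * fact n * (i * s ^ N)) (m * fact (n - 1) * (\<Sum>y<n. node_size y))
     ((m * fact (n - 1) * (\<Sum>y<n. repair_size y)) div d) enc"
    using p_pos k_ge_1 k_le_d card_files by (intro base.ex_exact_dss_symmetrized) auto
  moreover have "(\<Sum>y<n. node_size y) = N * s ^ N" "(\<Sum>y<n. repair_size y) = N * (h * s ^ (N - 1))"
    unfolding node_size_def repair_size_def using N_le_n by (simp_all add: sum_if_less_const)
  ultimately show ?thesis
    by simp
qed

lemma storage_ratio:
  "real n * real i * \<alpha> / (real n - real k + real i)
    = real (fact n * (i * s ^ N)) * \<alpha> / real (fact (n - 1) * (N * s ^ N))"
proof -
  have "fact n = n * fact (n - 1)"
    using d_less_n by (simp add: fact_reduce)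
  moreover have "real N = real n - real k + real i"
    using d_less_n k_le_d unfolding N_def by simp
  ultimately show ?thesis
    using s_pos by (simp add: field_simps)
qed

lemma bandwidth_ratio:
  "(real d - real k + real i) * \<alpha> / (real d - real k + 1) = real h * \<alpha> / real s"
  using k_le_d unfolding h_def s_def by (simp add: of_nat_diff algebra_simps)

theorem C_exact_ge:
  assumes "0 < \<alpha>"
  shows "ereal (real n * real i * \<alpha> / (real n - real k + real i))
    \<le> C_exact n k d \<alpha> ((real d - real k + real i) * \<alpha> / (real d - real k + 1))"
proof -
  define X where "X = fact n * (i * s ^ N)"
  define A where "A = fact (n - 1) * (N * s ^ N)"
  define G where "G = fact (n - 1) * (N * (h * s ^ (N - 1)))"
  have "real G * \<alpha> = real h * \<alpha> / real s * real A"
    using s_pos h_less_N unfolding G_def A_def by (simp add: field_simps power_eq_if)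
  moreover have "\<exists>p' e b enc. prime p' \<and> 1 \<le> e \<and> exact_dss n k d (p' ^ e) (m * X) (m * A) b enc
      \<and> real d * real b \<le> real m * real G" for m
  proof -
    obtain enc where "exact_dss n k d (p ^ 1) (m * X) (m * A) ((m * G) div d) enc"
      using ex_exact_dss[of m] unfolding X_def A_def G_def by (auto simp: mult.assoc)
    moreover have "d * ((m * G) div d) \<le> m * G"
      by (rule times_div_less_eq_dividend)
    ultimately show ?thesis
      using prime_p by (metis le_refl of_nat_le_iff of_nat_mult)
  qed
  moreover have "0 < A"
    using s_pos h_less_N unfolding A_def by simp
  ultimately have "ereal (X * \<alpha> / A) \<le> C_exact n k d \<alpha> (real h * \<alpha> / real s)"
    using assms by (intro C_exact_ge_if_replicable[where G = "real G"]) auto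
  then show ?thesis
    unfolding storage_ratio bandwidth_ratio X_def A_def .
qed

end

theorem theorem3p2:
  fixes n k d i :: nat and \<alpha> :: real
  assumes "1 \<le> k" and "k \<le> d" and "d < n" and "\<alpha> > 0"
    and "1 \<le> i" and "i \<le> k"
  shows "ereal (real n * real i * \<alpha> / (real n - real k + real i))
     \<le> C_exact n k d \<alpha> ((real d - real k + real i) * \<alpha> / (real d - real k + 1))"
proof -
  obtain p where "prime p" "(n - k + i) * (d - k + 1) < p"
    using bigger_prime by blast
  then interpret ye_barg n k d i p
    using assms by unfold_locales auto
  show ?thesis
    using assms(4) by (rule C_exact_ge)
qed

end
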